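(* For $n\ge 2$, there is a bijection between the set of signed permutations $\pi=\pi_1\pi_2\cdots\pi_{n-1}\pi_n$ of $\{0,1,\dots,n-1\}$ with $\pi_n=0$ (unbarred) that are representations of signed skew derangements on $[n]$, and the set of derangements of type $B$ on $[n-1]$.
   Context: A signed permutation on a set $S$ of integers is an arrangement of the elements of $S$ in which some entries carry a bar. A derangement of type $B$ on $[m]$ is a signed permutation $\tau_1\cdots\tau_m$ of $[m]$ with $\tau_i\neq i$ for all $i$ (where $\tau_i=\bar i$ is allowed). A signed set on $[n]$ is $[n]$ with some elements barred; for such $X$, $X-1$ is obtained by subtracting $1$ from each element using $\bar i-1=\overline{i-1}$. A signed skew derangement on $[n]$ is a bijection $f:X\to X-1$, for some signed set $X$ on $[n]$, with $f(x)\ne x$ for all $x\in X$. The representation of a bijection $f:X\to X-1$ is the signed permutation $\pi_1\cdots\pi_n$ of $\{0,\dots,n-1\}$ given by $\pi_i=f(\sigma_i)$, where $\sigma_i$ is the element of $X$ with underlying value $i$; this gives a bijection between all such maps $f$ (over all signed sets $X$) and all signed permutations of $\{0,\dots,n-1\}$. *)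

theory Defs
  imports Main
begin

text \<open>A signed element is a pair (value, barred); barred = True means the entry carries a bar.\<close>
type_synonym selem = "nat \<times> bool"

definition signed_perm :: "nat set \<Rightarrow> selem list \<Rightarrow> bool" where
  "signed_perm S \<pi> \<longleftrightarrow> distinct (map fst \<pi>) \<and> set (map fst \<pi>) = S"

text \<open>Derangements of type B on [m]: tau_i differs from the unbarred i (list index i-1 holds tau_i).\<close>
definition derangements_B :: "nat \<Rightarrow> selem list set" where
  "derangements_B m = {\<tau>. signed_perm {1..m} \<tau> \<and> (\<forall>i<m. \<tau> ! i \<noteq> (i + 1, False))}"

definition signed_set :: "nat \<Rightarrow> selem set \<Rightarrow> bool" where
  "signed_set n X \<longleftrightarrow> (\<exists>s. X = (\<lambda>i. (i, s i)) ` {1..n})"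

definition shift_down :: "selem set \<Rightarrow> selem set" where
  "shift_down X = (\<lambda>(i, b). (i - 1, b)) ` X"

definition signed_skew_derangement :: "nat \<Rightarrow> selem set \<Rightarrow> (selem \<Rightarrow> selem) \<Rightarrow> bool" where
  "signed_skew_derangement n X f \<longleftrightarrow>
     signed_set n X \<and> bij_betw f X (shift_down X) \<and> (\<forall>x\<in>X. f x \<noteq> x)"

definition representation :: "nat \<Rightarrow> selem set \<Rightarrow> (selem \<Rightarrow> selem) \<Rightarrow> selem list" where
  "representation n X f = map (\<lambda>i. f (THE x. x \<in> X \<and> fst x = i)) [1..<n+1]"

definition rep_skew_last0 :: "nat \<Rightarrow> selem list set" where
  "rep_skew_last0 n = {\<pi>. signed_perm {0..<n} \<pi> \<and> \<pi> ! (n - 1) = (0, False) \<and>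
      (\<exists>X f. signed_skew_derangement n X f \<and> \<pi> = representation n X f)}"

end

theory Submission
  imports Defs
begin

text \<open>
  A map \<open>f : X \<rightarrow> X - 1\<close> is determined by its representation \<open>\<pi>\<close>, and so are the bars of \<open>X\<close>:
  the element of \<open>X\<close> with value \<open>i + 1\<close> carries the bar that the value \<open>i\<close> carries in \<open>\<pi>\<close>.
  Hence \<open>\<pi>\<close> represents a signed skew derangement iff no entry \<open>\<pi> ! i\<close> has value \<open>i + 1\<close> and
  the bar of the value \<open>i\<close>. If \<open>\<pi>\<close> ends in an unbarred \<open>0\<close>, dropping it leaves a signed
  permutation \<open>\<rho>\<close> of \<open>[n - 1]\<close> with the same condition, \<open>0\<close> now counting as unbarred. Giving
  each value \<open>v\<close> of \<open>\<rho>\<close> the exclusive or of the bars of \<open>v\<close> and \<open>v - 1\<close> turns this condition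
  into the derangement condition of type B, and the inverse rebarring takes prefix parities.
\<close>

definition bar_of :: "selem list \<Rightarrow> nat \<Rightarrow> bool" where
  "bar_of \<pi> v \<longleftrightarrow> (v, True) \<in> set \<pi>"

lemma snd_eq_bar_of:
  assumes "distinct (map fst \<pi>)" and "x \<in> set \<pi>"
  shows "snd x = bar_of \<pi> (fst x)"
proof (cases x)
  case (Pair v b)
  have inj: "inj_on fst (set \<pi>)" using assms(1) by (simp add: distinct_map)
  have "(v, True) \<in> set \<pi> \<Longrightarrow> b"
    using inj_onD[OF inj, of "(v, True)" "(v, b)"] assms(2) Pair by simp
  then show ?thesis using assms(2) Pair by (auto simp: bar_of_def)
qed

lemma signed_perm_mem_iff:
  assumes "signed_perm S \<pi>"
  shows "x \<in> set \<pi> \<longleftrightarrow> fst x \<in> S \<and> snd x = bar_of \<pi> (fst x)"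
proof
  assume "x \<in> set \<pi>"
  then show "fst x \<in> S \<and> snd x = bar_of \<pi> (fst x)"
    using assms snd_eq_bar_of by (auto simp: signed_perm_def)
next
  assume x: "fst x \<in> S \<and> snd x = bar_of \<pi> (fst x)"
  then have "fst x \<in> fst ` set \<pi>" using assms by (simp add: signed_perm_def)
  then obtain y where "y \<in> set \<pi>" "fst y = fst x" by (metis imageE)
  moreover have "snd y = bar_of \<pi> (fst y)"
    using assms \<open>y \<in> set \<pi>\<close> snd_eq_bar_of by (auto simp: signed_perm_def)
  ultimately have "y = x" using x by (simp add: prod_eq_iff)
  with \<open>y \<in> set \<pi>\<close> show "x \<in> set \<pi>" by simp
qed

lemma set_signed_perm:
  "signed_perm S \<pi> \<Longrightarrow> set \<pi> = (\<lambda>v. (v, bar_of \<pi> v)) ` S"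
  by (auto simp: signed_perm_mem_iff)

lemma bar_of_imp_mem: "signed_perm S \<pi> \<Longrightarrow> bar_of \<pi> v \<Longrightarrow> v \<in> S"
  unfolding bar_of_def signed_perm_def by (auto intro: rev_image_eqI)

lemma length_signed_perm: "signed_perm S \<pi> \<Longrightarrow> length \<pi> = card S"
  using distinct_card[of "map fst \<pi>"] by (simp add: signed_perm_def)

text \<open>\<open>(Suc i, bar_of \<pi> i)\<close> is the element of \<open>X\<close> with value \<open>i + 1\<close>, whose image is \<open>\<pi> ! i\<close>.\<close>

definition skew_fixed_point_free :: "selem list \<Rightarrow> bool" where
  "skew_fixed_point_free \<pi> \<longleftrightarrow> (\<forall>i<length \<pi>. \<pi> ! i \<noteq> (Suc i, bar_of \<pi> i))"

lemma signed_set_iff: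
  "signed_set n X \<longleftrightarrow> (\<exists>t. X = (\<lambda>v. (Suc v, t v)) ` {..<n})"
proof
  assume "signed_set n X"
  then obtain s where "X = (\<lambda>j. (j, s j)) ` Suc ` {..<n}"
    unfolding signed_set_def image_Suc_lessThan by blast
  then have "X = (\<lambda>v. (Suc v, s (Suc v))) ` {..<n}"
    by (simp add: image_image)
  then show "\<exists>t. X = (\<lambda>v. (Suc v, t v)) ` {..<n}"
    by (rule exI[of _ "\<lambda>v. s (Suc v)"])
next
  assume "\<exists>t. X = (\<lambda>v. (Suc v, t v)) ` {..<n}"
  then obtain t where "X = (\<lambda>v. (Suc v, t v)) ` {..<n}"
    by blast
  then have "X = (\<lambda>j. (j, t (j - 1))) ` Suc ` {..<n}"
    by (simp add: image_image)
  then show "signed_set n X"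
    unfolding signed_set_def image_Suc_lessThan by (rule exI[of _ "\<lambda>j. t (j - 1)"])
qed

lemma shift_down_signed_set: "shift_down ((\<lambda>v. (Suc v, t v)) ` A) = (\<lambda>v. (v, t v)) ` A"
  by (simp add: shift_down_def image_image)

lemma representation_signed_set:
  "representation n ((\<lambda>v. (Suc v, t v)) ` {..<n}) f = map (\<lambda>v. f (Suc v, t v)) [0..<n]"
proof -
  have "(THE x. x \<in> (\<lambda>v. (Suc v, t v)) ` {..<n} \<and> fst x = Suc v) = (Suc v, t v)" if "v < n" for v
    by (rule the_equality) (use that in auto)
  moreover have "[1..<n + 1] = map Suc [0..<n]"
    by (simp add: map_Suc_upt)
  ultimately show ?thesis
    unfolding representation_def by simp
qed

lemma skew_fixed_point_free_representation:
  assumes "signed_skew_derangement n X f"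
  shows "skew_fixed_point_free (representation n X f)"
proof -
  obtain t where X: "X = (\<lambda>v. (Suc v, t v)) ` {..<n}"
    using assms by (auto simp: signed_skew_derangement_def signed_set_iff)
  have bij: "bij_betw f X (shift_down X)" and no_fix: "\<forall>x\<in>X. f x \<noteq> x"
    using assms by (auto simp: signed_skew_derangement_def)
  let ?\<pi> = "map (\<lambda>v. f (Suc v, t v)) [0..<n]"
  have "set ?\<pi> = f ` X"
    by (simp add: X image_image atLeast0LessThan)
  also have "\<dots> = (\<lambda>v. (v, t v)) ` {..<n}"
    using bij by (simp add: bij_betw_def X shift_down_signed_set)
  finally have "bar_of ?\<pi> v \<longleftrightarrow> v < n \<and> t v" for v
    by (auto simp: bar_of_def)
  then have "?\<pi> ! i \<noteq> (Suc i, bar_of ?\<pi> i)" if "i < n" for i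
    using no_fix that by (auto simp: X)
  then show ?thesis
    by (simp add: X representation_signed_set skew_fixed_point_free_def)
qed

lemma representation_of_skew_fixed_point_free:
  assumes \<pi>: "signed_perm {0..<n} \<pi>" and free: "skew_fixed_point_free \<pi>"
  shows "\<exists>X f. signed_skew_derangement n X f \<and> \<pi> = representation n X f"
proof -
  define X where "X = (\<lambda>v. (Suc v, bar_of \<pi> v)) ` {..<n}"
  define f where "f x = \<pi> ! (fst x - 1)" for x :: selem
  have len: "length \<pi> = n" using length_signed_perm[OF \<pi>] by simp
  have rep: "representation n X f = \<pi>"
    using map_nth[of \<pi>] by (simp add: X_def f_def representation_signed_set len)
  have "inj_on f X"
  proof -
    have "inj_on (nth \<pi>) {..<n}"
      using \<pi> len by (simp add: inj_on_nth signed_perm_def distinct_map)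
    then show ?thesis by (auto simp: inj_on_def X_def f_def)
  qed
  moreover have "f ` X = shift_down X"
  proof -
    have "f ` X = set (representation n X f)"
      by (simp add: X_def representation_signed_set image_image atLeast0LessThan)
    also have "\<dots> = shift_down X"
      unfolding rep by (simp add: set_signed_perm[OF \<pi>] X_def shift_down_signed_set atLeast0LessThan)
    finally show ?thesis .
  qed
  moreover have "\<forall>x\<in>X. f x \<noteq> x"
    using free len by (auto simp: X_def f_def skew_fixed_point_free_def)
  moreover have "signed_set n X"
    unfolding signed_set_iff X_def by blast
  ultimately have "signed_skew_derangement n X f"
    unfolding signed_skew_derangement_def bij_betw_def by blast
  with rep show ?thesis by blast
qed

lemma representation_skew_derangement_iff:
  assumes "signed_perm {0..<n} \<pi>"
  shows "(\<exists>X f. signed_skew_derangement n X f \<and> \<pi> = representation n X f) \<longleftrightarrow>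
    skew_fixed_point_free \<pi>"
proof
  assume "\<exists>X f. signed_skew_derangement n X f \<and> \<pi> = representation n X f"
  then obtain X f where "signed_skew_derangement n X f" "\<pi> = representation n X f"
    by blast
  then show "skew_fixed_point_free \<pi>"
    by (simp add: skew_fixed_point_free_representation)
next
  assume "skew_fixed_point_free \<pi>"
  then show "\<exists>X f. signed_skew_derangement n X f \<and> \<pi> = representation n X f"
    by (rule representation_of_skew_fixed_point_free[OF assms])
qed

lemma rep_skew_last0_eq:
  "rep_skew_last0 n =
     {\<pi>. signed_perm {0..<n} \<pi> \<and> \<pi> ! (n - 1) = (0, False) \<and> skew_fixed_point_free \<pi>}"
proof -
  have "(signed_perm {0..<n} \<pi> \<and> \<pi> ! (n - 1) = (0, False) \<and>
      (\<exists>X f. signed_skew_derangement n X f \<and> \<pi> = representation n X f)) \<longleftrightarrow>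
    (signed_perm {0..<n} \<pi> \<and> \<pi> ! (n - 1) = (0, False) \<and> skew_fixed_point_free \<pi>)" for \<pi>
    using representation_skew_derangement_iff[of n \<pi>] by blast
  then show ?thesis unfolding rep_skew_last0_def by blast
qed

lemma signed_perm_snoc_zero:
  "signed_perm {0..<Suc m} (\<rho> @ [(0, False)]) \<longleftrightarrow> signed_perm {1..m} \<rho>"
proof -
  have interval: "{0..<Suc m} = insert 0 {1..m}" "0 \<notin> {1..m}"
    by auto
  have key: "0 \<notin> A \<and> insert 0 A = {0..<Suc m} \<longleftrightarrow> A = {1..m}" for A :: "nat set"
  proof
    assume "0 \<notin> A \<and> insert 0 A = {0..<Suc m}"
    then have "0 \<notin> A" and A: "insert 0 A = {0..<Suc m}" by simp_all
    have "A = insert 0 A - {0}" using \<open>0 \<notin> A\<close> by simp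
    also have "\<dots> = {1..m}" unfolding A interval using interval by simp
    finally show "A = {1..m}" .
  qed (use interval in simp)
  have "signed_perm {0..<Suc m} (\<rho> @ [(0, False)]) \<longleftrightarrow>
      distinct (map fst \<rho>) \<and> 0 \<notin> fst ` set \<rho> \<and> insert 0 (fst ` set \<rho>) = {0..<Suc m}"
    by (simp add: signed_perm_def)
  then show ?thesis
    by (simp only: key signed_perm_def set_map)
qed

lemma skew_fixed_point_free_snoc_zero:
  "skew_fixed_point_free (\<rho> @ [(0, False)]) \<longleftrightarrow> skew_fixed_point_free \<rho>"
proof -
  have "bar_of (\<rho> @ [(0, False)]) = bar_of \<rho>"
    by (simp add: bar_of_def fun_eq_iff)
  then show ?thesis
    by (simp add: skew_fixed_point_free_def nth_append less_Suc_eq)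
qed

lemma rep_skew_last0_Suc:
  "rep_skew_last0 (Suc m) =
     (\<lambda>\<rho>. \<rho> @ [(0, False)]) ` {\<rho>. signed_perm {1..m} \<rho> \<and> skew_fixed_point_free \<rho>}"
proof safe
  fix \<pi> assume "\<pi> \<in> rep_skew_last0 (Suc m)"
  then have \<pi>: "signed_perm {0..<Suc m} \<pi>" "\<pi> ! m = (0, False)" "skew_fixed_point_free \<pi>"
    by (simp_all add: rep_skew_last0_eq)
  then have "\<pi> = take m \<pi> @ [(0, False)]"
    using take_Suc_conv_app_nth[of m \<pi>] length_signed_perm[OF \<pi>(1)] by simp
  then obtain \<rho> where \<rho>: "\<pi> = \<rho> @ [(0, False)]" ..
  with \<pi> have "signed_perm {1..m} \<rho> \<and> skew_fixed_point_free \<rho>"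
    by (simp add: signed_perm_snoc_zero skew_fixed_point_free_snoc_zero)
  with \<rho> show "\<pi> \<in> (\<lambda>\<rho>. \<rho> @ [(0, False)]) ` {\<rho>. signed_perm {1..m} \<rho> \<and> skew_fixed_point_free \<rho>}"
    by blast
next
  fix \<rho> assume \<rho>: "signed_perm {1..m} \<rho>" "skew_fixed_point_free \<rho>"
  then have "(\<rho> @ [(0, False)]) ! m = (0, False)"
    using nth_append_length[of \<rho> "(0, False)" "[]"] length_signed_perm[OF \<rho>(1)] by simp
  with \<rho> show "\<rho> @ [(0, False)] \<in> rep_skew_last0 (Suc m)"
    by (simp add: rep_skew_last0_eq signed_perm_snoc_zero skew_fixed_point_free_snoc_zero)
qed

definition rebar :: "(nat \<Rightarrow> bool) \<Rightarrow> selem list \<Rightarrow> selem list" where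
  "rebar b \<pi> = map (\<lambda>x. (fst x, b (fst x))) \<pi>"

lemma map_fst_rebar [simp]: "map fst (rebar b \<pi>) = map fst \<pi>"
  by (simp add: rebar_def comp_def)

lemma length_rebar [simp]: "length (rebar b \<pi>) = length \<pi>"
  by (simp add: rebar_def)

lemma nth_rebar [simp]: "i < length \<pi> \<Longrightarrow> rebar b \<pi> ! i = (fst (\<pi> ! i), b (fst (\<pi> ! i)))"
  by (simp add: rebar_def)

lemma rebar_rebar [simp]: "rebar b (rebar c \<pi>) = rebar b \<pi>"
  by (simp add: rebar_def)

lemma signed_perm_rebar [simp]: "signed_perm S (rebar b \<pi>) \<longleftrightarrow> signed_perm S \<pi>"
  by (simp only: signed_perm_def map_fst_rebar)

lemma bar_of_rebar:
  assumes "signed_perm S \<pi>"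
  shows "bar_of (rebar b \<pi>) v \<longleftrightarrow> v \<in> S \<and> b v"
  using assms by (auto simp: bar_of_def rebar_def signed_perm_def image_iff)

lemma rebar_eq_self:
  assumes "signed_perm S \<pi>" and "\<And>v. v \<in> S \<Longrightarrow> b v = bar_of \<pi> v"
  shows "rebar b \<pi> = \<pi>"
  unfolding rebar_def
proof (rule map_idI)
  fix x assume "x \<in> set \<pi>"
  then show "(fst x, b (fst x)) = x" using assms by (simp add: signed_perm_mem_iff prod_eq_iff)
qed

fun prefix_xor :: "(nat \<Rightarrow> bool) \<Rightarrow> nat \<Rightarrow> bool" where
  "prefix_xor p 0 = False"
| "prefix_xor p (Suc j) = (prefix_xor p j \<noteq> p (Suc j))"

lemma prefix_xor_cong: "(\<And>k. k \<in> {1..j} \<Longrightarrow> p k = q k) \<Longrightarrow> prefix_xor p j = prefix_xor q j"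
  by (induction j) auto

lemma prefix_xor_differences: "\<not> b 0 \<Longrightarrow> prefix_xor (\<lambda>v. b v \<noteq> b (v - 1)) j = b j"
  by (induction j) auto

definition difference_bars :: "selem list \<Rightarrow> selem list" where
  "difference_bars \<rho> = rebar (\<lambda>v. bar_of \<rho> v \<noteq> bar_of \<rho> (v - 1)) \<rho>"

definition prefix_bars :: "selem list \<Rightarrow> selem list" where
  "prefix_bars \<tau> = rebar (prefix_xor (bar_of \<tau>)) \<tau>"

lemma prefix_bars_difference_bars:
  assumes \<rho>: "signed_perm {1..m} \<rho>"
  shows "prefix_bars (difference_bars \<rho>) = \<rho>"
proof -
  have bars: "prefix_xor (bar_of (difference_bars \<rho>)) v = bar_of \<rho> v" if "v \<in> {1..m}" for v
  proof -
    have "prefix_xor (bar_of (difference_bars \<rho>)) v = prefix_xor (\<lambda>v. bar_of \<rho> v \<noteq> bar_of \<rho> (v - 1)) v"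
      using that by (intro prefix_xor_cong) (auto simp: difference_bars_def bar_of_rebar[OF \<rho>])
    also have "\<dots> = bar_of \<rho> v"
      using bar_of_imp_mem[OF \<rho>, of 0] by (intro prefix_xor_differences) auto
    finally show ?thesis .
  qed
  show ?thesis
    using rebar_eq_self[OF \<rho> bars] by (simp add: difference_bars_def prefix_bars_def)
qed

lemma difference_bars_prefix_bars:
  assumes \<tau>: "signed_perm {1..m} \<tau>"
  shows "difference_bars (prefix_bars \<tau>) = \<tau>"
proof -
  have "bar_of (prefix_bars \<tau>) u = prefix_xor (bar_of \<tau>) u" if "u \<le> m" for u
    using that by (cases u) (auto simp: prefix_bars_def bar_of_rebar[OF \<tau>])
  then have bars: "(bar_of (prefix_bars \<tau>) v \<noteq> bar_of (prefix_bars \<tau>) (v - 1)) = bar_of \<tau> v"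
    if "v \<in> {1..m}" for v
    using that by (cases v) auto
  show ?thesis
    using rebar_eq_self[OF \<tau> bars] by (simp add: difference_bars_def prefix_bars_def)
qed

lemma skew_fixed_point_free_iff_difference_bars:
  assumes "distinct (map fst \<rho>)"
  shows "skew_fixed_point_free \<rho> \<longleftrightarrow> (\<forall>i<length \<rho>. difference_bars \<rho> ! i \<noteq> (Suc i, False))"
proof -
  have "\<rho> ! i = (Suc i, bar_of \<rho> i) \<longleftrightarrow> difference_bars \<rho> ! i = (Suc i, False)"
    if "i < length \<rho>" for i
    using snd_eq_bar_of[OF assms nth_mem[OF that]] that
    by (auto simp: difference_bars_def prod_eq_iff)
  then show ?thesis by (auto simp: skew_fixed_point_free_def)
qed

lemma derangements_B_eq:
  "derangements_B m = {\<tau>. signed_perm {1..m} \<tau> \<and> (\<forall>i<length \<tau>. \<tau> ! i \<noteq> (Suc i, False))}"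
  by (auto simp: derangements_B_def length_signed_perm)

lemma bij_betw_difference_bars:
  "bij_betw difference_bars {\<rho>. signed_perm {1..m} \<rho> \<and> skew_fixed_point_free \<rho>} (derangements_B m)"
proof (rule bij_betw_byWitness[where f' = prefix_bars])
  show "\<forall>\<rho>\<in>{\<rho>. signed_perm {1..m} \<rho> \<and> skew_fixed_point_free \<rho>}. prefix_bars (difference_bars \<rho>) = \<rho>"
    using prefix_bars_difference_bars by blast
  show "\<forall>\<tau>\<in>derangements_B m. difference_bars (prefix_bars \<tau>) = \<tau>"
    using difference_bars_prefix_bars by (auto simp: derangements_B_eq)
  show "difference_bars ` {\<rho>. signed_perm {1..m} \<rho> \<and> skew_fixed_point_free \<rho>} \<subseteq> derangements_B m"
  proof clarify
    fix \<rho> assume \<rho>: "signed_perm {1..m} \<rho>" "skew_fixed_point_free \<rho>"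
    then have "\<forall>i<length \<rho>. difference_bars \<rho> ! i \<noteq> (Suc i, False)"
      using skew_fixed_point_free_iff_difference_bars signed_perm_def by blast
    with \<rho> show "difference_bars \<rho> \<in> derangements_B m"
      by (simp add: derangements_B_eq difference_bars_def)
  qed
  show "prefix_bars ` derangements_B m \<subseteq> {\<rho>. signed_perm {1..m} \<rho> \<and> skew_fixed_point_free \<rho>}"
  proof clarify
    fix \<tau> assume "\<tau> \<in> derangements_B m"
    then have \<tau>: "signed_perm {1..m} \<tau>" "\<forall>i<length \<tau>. \<tau> ! i \<noteq> (Suc i, False)"
      by (auto simp: derangements_B_eq)
    have \<rho>: "signed_perm {1..m} (prefix_bars \<tau>)" "length (prefix_bars \<tau>) = length \<tau>"
      using \<tau>(1) by (simp_all add: prefix_bars_def)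
    moreover have "skew_fixed_point_free (prefix_bars \<tau>)"
      using skew_fixed_point_free_iff_difference_bars[of "prefix_bars \<tau>"] \<rho> \<tau>
        difference_bars_prefix_bars[OF \<tau>(1)] by (simp add: signed_perm_def)
    ultimately show "signed_perm {1..m} (prefix_bars \<tau>) \<and> skew_fixed_point_free (prefix_bars \<tau>)"
      by blast
  qed
qed

theorem lemma2:
  fixes n :: nat
  assumes "n \<ge> 2"
  shows "\<exists>g. bij_betw g (rep_skew_last0 n) (derangements_B (n - 1))"
proof -
  obtain m where n: "n = Suc m" using assms by (cases n) auto
  let ?A = "{\<rho>. signed_perm {1..m} \<rho> \<and> skew_fixed_point_free \<rho>}"
  have "bij_betw (\<lambda>\<rho>. \<rho> @ [(0, False)]) ?A (rep_skew_last0 n)"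
    by (simp add: bij_betw_def inj_on_def rep_skew_last0_Suc n)
  then have "bij_betw (difference_bars \<circ> the_inv_into ?A (\<lambda>\<rho>. \<rho> @ [(0, False)]))
      (rep_skew_last0 n) (derangements_B (n - 1))"
    using bij_betw_trans[OF bij_betw_the_inv_into bij_betw_difference_bars] n by simp
  then show ?thesis by blast
qed

end
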